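(* For every positive integer $n$ such that $h_{n-1}h_{n+1}-h_n^2\neq 0$, $$h_{n+3}=\frac{h_{n+1}^3-2h_nh_{n+1}h_{n+2}+h_{n-1}h_{n+2}^2}{h_{n-1}h_{n+1}-h_n^2}.$$
   Context: Let $p,q,a,b$ be complex numbers. The Horadam-Lucas sequence $(h_n)_{n\ge0}$ is defined by $h_0=2b-ap$, $h_1=bp-2aq$, and $h_n=ph_{n-1}-qh_{n-2}$ for $n\ge 2$. *)

theory Defs
  imports Complex_Main
begin

fun horadam_lucas :: "complex \<Rightarrow> complex \<Rightarrow> complex \<Rightarrow> complex \<Rightarrow> nat \<Rightarrow> complex" where
  "horadam_lucas p q a b 0 = 2 * b - a * p"
| "horadam_lucas p q a b (Suc 0) = b * p - 2 * a * q"
| "horadam_lucas p q a b (Suc (Suc n)) =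
     p * horadam_lucas p q a b (Suc n) - q * horadam_lucas p q a b n"

end

theory Submission
  imports Defs
begin

text \<open>Only the recurrence matters: expressing four consecutive terms through the first two
  by it turns the claim, cleared of its denominator, into a polynomial identity in p, q and
  those two terms, valid in every commutative ring.\<close>

lemma linear_recurrence_cubic_identity:
  fixes u :: "nat \<Rightarrow> 'a::comm_ring_1"
  assumes rec: "\<And>k. u (Suc (Suc k)) = p * u (Suc k) - q * u k"
  shows "u (n + 4) * (u n * u (n + 2) - (u (n + 1))^2) =
    (u (n + 2))^3 - 2 * u (n + 1) * u (n + 2) * u (n + 3) + u n * (u (n + 3))^2"
proof -
  have u2: "u (n + 2) = p * u (n + 1) - q * u n" using rec[of n] by simp
  have u3: "u (n + 3) = p * u (n + 2) - q * u (n + 1)"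
    using rec[of "n + 1"] by (simp add: numeral_3_eq_3)
  have u4: "u (n + 4) = p * u (n + 3) - q * u (n + 2)"
    using rec[of "n + 2"] by (simp add: eval_nat_numeral)
  show ?thesis unfolding u4 u3 u2 by (simp add: algebra_simps power2_eq_square power3_eq_cube)
qed

theorem mainTheorem4:
  fixes p q a b :: complex and n :: nat
  defines "h \<equiv> horadam_lucas p q a b"
  assumes "n \<ge> 1"
    and "h (n - 1) * h (n + 1) - (h n)^2 \<noteq> 0"
  shows "h (n + 3) =
    ((h (n + 1))^3 - 2 * h n * h (n + 1) * h (n + 2) + h (n - 1) * (h (n + 2))^2)
    / (h (n - 1) * h (n + 1) - (h n)^2)"
proof -
  obtain m where n: "n = Suc m" using assms(2) by (cases n) auto
  have "h (m + 4) * (h m * h (m + 2) - (h (m + 1))^2) =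
      (h (m + 2))^3 - 2 * h (m + 1) * h (m + 2) * h (m + 3) + h m * (h (m + 3))^2"
    by (rule linear_recurrence_cubic_identity) (simp add: h_def)
  moreover have "m + 4 = n + 3" "m + 3 = n + 2" "m + 2 = n + 1" "m + 1 = n" "m = n - 1"
    using n by simp_all
  ultimately show ?thesis using assms(3) by (simp add: eq_divide_eq add.commute)
qed

end
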